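(* Let $(X,d)$ be a finite metric space and $m\ge 0$ an integer. Let $G_0,G_1,\dots,G_m$ be graphs with vertex set $X$, where $G_0$ is the complete graph on $X$ and, for each $0\le i<m$, $G_{i+1}$ is obtained from $G_i$ through a $d$-erasure. Then $G_m$ contains a minimum spanning tree of $(X,d)$.
   Context: All graphs are finite, undirected, simple; edges $xy$ are weighted by $d(xy)=d(x,y)$. A minimum spanning tree of $(X,d)$ is a spanning tree of the complete graph on $X$ minimizing the sum of the weights of its edges. A facet edge of $G$ is an edge $xy$ such that $\{x,y\}$ is a maximal clique of $G$. An edge of $G$ is exposed if it is contained in a unique maximal clique of $G$ and it is not a facet edge. For graphs $G,H$ on vertex set $X$, $H$ is obtained from $G$ through a $d$-erasure if $H=G-e$ for an exposed edge $e$ of $G$ such that $d(e)\ge d(e')$ for every exposed edge $e'$ of $G$. *)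

theory Defs
  imports Complex_Main
begin

definition finite_metric_space :: "'a set \<Rightarrow> ('a \<Rightarrow> 'a \<Rightarrow> real) \<Rightarrow> bool" where
  "finite_metric_space X d \<longleftrightarrow> finite X \<and>
     (\<forall>x\<in>X. \<forall>y\<in>X. (d x y = 0 \<longleftrightarrow> x = y)) \<and>
     (\<forall>x\<in>X. \<forall>y\<in>X. d x y = d y x) \<and>
     (\<forall>x\<in>X. \<forall>y\<in>X. \<forall>z\<in>X. d x z \<le> d x y + d y z)"

definition graph_on :: "'a set \<Rightarrow> 'a set set \<Rightarrow> bool" where
  "graph_on X E \<longleftrightarrow> (\<forall>e\<in>E. e \<subseteq> X \<and> card e = 2)"

definition complete_graph :: "'a set \<Rightarrow> 'a set set" where
  "complete_graph X = {{x, y} | x y. x \<in> X \<and> y \<in> X \<and> x \<noteq> y}"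

text \<open>Weight of an edge e = {x,y}: d(e) = d(x,y) (well defined since d is symmetric).\<close>
definition edge_weight :: "('a \<Rightarrow> 'a \<Rightarrow> real) \<Rightarrow> 'a set \<Rightarrow> real" where
  "edge_weight d e = d (SOME x. x \<in> e) (SOME y. y \<in> e \<and> y \<noteq> (SOME x. x \<in> e))"

definition clique :: "'a set \<Rightarrow> 'a set set \<Rightarrow> 'a set \<Rightarrow> bool" where
  "clique X E C \<longleftrightarrow> C \<subseteq> X \<and> (\<forall>x\<in>C. \<forall>y\<in>C. x \<noteq> y \<longrightarrow> {x, y} \<in> E)"

definition maximal_clique :: "'a set \<Rightarrow> 'a set set \<Rightarrow> 'a set \<Rightarrow> bool" where
  "maximal_clique X E C \<longleftrightarrow> clique X E C \<and> (\<forall>C'. clique X E C' \<and> C \<subseteq> C' \<longrightarrow> C' = C)"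

definition facet_edge :: "'a set \<Rightarrow> 'a set set \<Rightarrow> 'a set \<Rightarrow> bool" where
  "facet_edge X E e \<longleftrightarrow> e \<in> E \<and> maximal_clique X E e"

definition exposed_edge :: "'a set \<Rightarrow> 'a set set \<Rightarrow> 'a set \<Rightarrow> bool" where
  "exposed_edge X E e \<longleftrightarrow> e \<in> E \<and> (\<exists>!C. maximal_clique X E C \<and> e \<subseteq> C) \<and> \<not> facet_edge X E e"

definition d_erasure :: "'a set \<Rightarrow> ('a \<Rightarrow> 'a \<Rightarrow> real) \<Rightarrow> 'a set set \<Rightarrow> 'a set set \<Rightarrow> bool" where
  "d_erasure X d G H \<longleftrightarrow> (\<exists>e. exposed_edge X G e \<and> H = G - {e} \<and>
       (\<forall>e'. exposed_edge X G e' \<longrightarrow> edge_weight d e' \<le> edge_weight d e))"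

definition connected_on :: "'a set \<Rightarrow> 'a set set \<Rightarrow> bool" where
  "connected_on X T \<longleftrightarrow> (\<forall>x\<in>X. \<forall>y\<in>X. (\<lambda>u v. {u, v} \<in> T)\<^sup>*\<^sup>* x y)"

text \<open>A tree is a connected acyclic graph; acyclicity is expressed as: removing any edge
  disconnects its endpoints (every edge is a bridge).\<close>
definition spanning_tree :: "'a set \<Rightarrow> 'a set set \<Rightarrow> bool" where
  "spanning_tree X T \<longleftrightarrow> T \<subseteq> complete_graph X \<and> connected_on X T \<and>
     (\<forall>x y. {x, y} \<in> T \<longrightarrow> \<not> (\<lambda>u v. {u, v} \<in> T - {{x, y}})\<^sup>*\<^sup>* x y)"

definition tree_weight :: "('a \<Rightarrow> 'a \<Rightarrow> real) \<Rightarrow> 'a set set \<Rightarrow> real" where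
  "tree_weight d T = (\<Sum>e\<in>T. edge_weight d e)"

definition minimum_spanning_tree :: "'a set \<Rightarrow> ('a \<Rightarrow> 'a \<Rightarrow> real) \<Rightarrow> 'a set set \<Rightarrow> bool" where
  "minimum_spanning_tree X d T \<longleftrightarrow> spanning_tree X T \<and>
     (\<forall>T'. spanning_tree X T' \<longrightarrow> tree_weight d T \<le> tree_weight d T')"

end

theory Submission
  imports Defs
begin

text \<open>Erasures only remove edges lying in a unique maximal clique, so every \<open>G\<^sub>i\<close> stays
  chordal: each nonempty set of vertices has a simplicial vertex.  In such a graph an exposed
  edge crossing a cut is never the only exposed edge crossing it.  This drives the usual
  exchange argument: if a minimum connected spanning subgraph \<open>T \<subseteq> G\<^sub>i\<close> contains the erased
  edge \<open>e\<close>, replace \<open>e\<close> by another exposed edge crossing the cut of \<open>T - {e}\<close>; as \<open>e\<close> was a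
  heaviest exposed edge, the weight does not grow.  Since all weights are positive, a minimum
  connected spanning subgraph is a tree.\<close>

section \<open>Cliques and exposed edges\<close>

lemma clique_subset: "clique Y E K \<Longrightarrow> K \<subseteq> Y"
  unfolding clique_def by simp

lemma clique_edge: "clique Y E K \<Longrightarrow> a \<in> K \<Longrightarrow> b \<in> K \<Longrightarrow> a \<noteq> b \<Longrightarrow> {a, b} \<in> E"
  unfolding clique_def by simp

lemma clique_subset_clique: "clique Y E K \<Longrightarrow> K' \<subseteq> K \<Longrightarrow> clique Y E K'"
  unfolding clique_def by blast

lemma clique_vertices_change: "clique Y E K \<Longrightarrow> K \<subseteq> Y' \<Longrightarrow> clique Y' E K"
  unfolding clique_def by blast

lemma maximal_cliqueD:
  "maximal_clique Y E K \<Longrightarrow> clique Y E K"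
  "maximal_clique Y E K \<Longrightarrow> clique Y E K' \<Longrightarrow> K \<subseteq> K' \<Longrightarrow> K' = K"
  unfolding maximal_clique_def by simp_all

lemma ex_maximal_clique:
  assumes "finite Y" "clique Y E K"
  obtains M where "maximal_clique Y E M" "K \<subseteq> M"
proof -
  have fin: "finite {M. clique Y E M}"
    by (rule finite_subset[of _ "Pow Y"]) (auto simp: clique_def assms(1))
  have "K \<in> {M. clique Y E M}"
    using assms(2) by simp
  from finite_has_maximal2[OF fin this] obtain M where M: "clique Y E M" "K \<subseteq> M"
    and max: "\<And>M'. clique Y E M' \<Longrightarrow> M \<subseteq> M' \<Longrightarrow> M = M'"
    by auto
  have "maximal_clique Y E M"
    unfolding maximal_clique_def using M(1) max by (metis (full_types))
  then show ?thesis
    using that M(2) by blast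
qed

lemma maximal_clique_Diff_vertex:
  assumes "maximal_clique Y E M" "s \<notin> M"
  shows "maximal_clique (Y - {s}) E M"
  unfolding maximal_clique_def
proof (intro conjI allI impI)
  have "M \<subseteq> Y - {s}"
    using clique_subset[OF maximal_cliqueD(1)[OF assms(1)]] assms(2) by blast
  then show "clique (Y - {s}) E M"
    by (rule clique_vertices_change[OF maximal_cliqueD(1)[OF assms(1)]])
  fix C' assume "clique (Y - {s}) E C' \<and> M \<subseteq> C'"
  then show "C' = M"
    using maximal_cliqueD(2)[OF assms(1)] clique_vertices_change[of "Y - {s}" E C' Y]
      clique_subset[of "Y - {s}" E C'] by blast
qed

lemma exposed_edgeI:
  assumes "f \<in> E" "clique Y E C" "f \<subseteq> C" "C \<noteq> f"
    and top: "\<And>K. clique Y E K \<Longrightarrow> f \<subseteq> K \<Longrightarrow> K \<subseteq> C"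
  shows "exposed_edge Y E f"
proof -
  have C: "maximal_clique Y E C"
    unfolding maximal_clique_def
  proof (intro conjI allI impI)
    fix C' assume "clique Y E C' \<and> C \<subseteq> C'"
    then show "C' = C"
      using top[of C'] assms(3) by auto
  qed (rule assms(2))
  have "\<exists>!C. maximal_clique Y E C \<and> f \<subseteq> C"
  proof (rule ex1I[of _ C])
    show "maximal_clique Y E C \<and> f \<subseteq> C"
      using C assms(3) by simp
    show "M = C" if "maximal_clique Y E M \<and> f \<subseteq> M" for M
      using that top[of M] maximal_cliqueD[of Y E M] assms(2) by blast
  qed
  moreover have "\<not> facet_edge Y E f"
    using maximal_cliqueD(2)[of Y E f C] assms(2-4) unfolding facet_edge_def by auto
  ultimately show ?thesis
    unfolding exposed_edge_def using assms(1) by blast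
qed

lemma exposed_edgeE:
  assumes "finite Y" "exposed_edge Y E f"
  obtains C where "maximal_clique Y E C" "f \<subseteq> C" "C \<noteq> f"
    "\<And>K. clique Y E K \<Longrightarrow> f \<subseteq> K \<Longrightarrow> K \<subseteq> C"
proof -
  have fE: "f \<in> E" and not_facet: "\<not> facet_edge Y E f"
    and ex1: "\<exists>!C. maximal_clique Y E C \<and> f \<subseteq> C"
    using assms(2) unfolding exposed_edge_def by simp_all
  from ex1 obtain C where C: "maximal_clique Y E C \<and> f \<subseteq> C"
    and unique: "\<And>M. maximal_clique Y E M \<and> f \<subseteq> M \<Longrightarrow> M = C"
    by (elim ex1E) blast
  have "C \<noteq> f"
    using C fE not_facet unfolding facet_edge_def by auto
  moreover have "K \<subseteq> C" if K: "clique Y E K" "f \<subseteq> K" for K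
  proof -
    obtain M where "maximal_clique Y E M" "K \<subseteq> M"
      using ex_maximal_clique[OF assms(1) K(1)] .
    with unique[of M] K(2) show ?thesis
      by auto
  qed
  ultimately show ?thesis
    using that C by auto
qed

lemma exposed_edge_subset:
  assumes "exposed_edge Y E f"
  shows "f \<in> E" "f \<subseteq> Y"
proof -
  show "f \<in> E"
    using assms unfolding exposed_edge_def by simp
  obtain C where "maximal_clique Y E C" "f \<subseteq> C"
    using assms unfolding exposed_edge_def by (meson ex1_implies_ex)
  then show "f \<subseteq> Y"
    using clique_subset[OF maximal_cliqueD(1)] by blast
qed

section \<open>Simplicial vertices\<close>

definition neighbours :: "'a set set \<Rightarrow> 'a set \<Rightarrow> 'a \<Rightarrow> 'a set" where
  "neighbours E Y s = {a \<in> Y. {s, a} \<in> E}"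

definition simplicial_vertex :: "'a set set \<Rightarrow> 'a set \<Rightarrow> 'a \<Rightarrow> bool" where
  "simplicial_vertex E Y s \<longleftrightarrow> s \<in> Y \<and> clique Y E (neighbours E Y s)"

text \<open>By Dirac's theorem these are exactly the chordal graphs on \<open>Y\<close>.\<close>
definition hereditarily_simplicial :: "'a set set \<Rightarrow> 'a set \<Rightarrow> bool" where
  "hereditarily_simplicial E Y \<longleftrightarrow> (\<forall>Z\<subseteq>Y. Z \<noteq> {} \<longrightarrow> (\<exists>s. simplicial_vertex E Z s))"

lemma hereditarily_simplicial_subset:
  "hereditarily_simplicial E Y \<Longrightarrow> Y' \<subseteq> Y \<Longrightarrow> hereditarily_simplicial E Y'"
  unfolding hereditarily_simplicial_def by blast

lemma closed_neighbourhood_clique: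
  assumes "simplicial_vertex E Y s"
  shows "clique Y E (insert s (neighbours E Y s))"
  unfolding clique_def
proof (intro conjI ballI impI)
  show "insert s (neighbours E Y s) \<subseteq> Y"
    using assms unfolding simplicial_vertex_def neighbours_def by blast
  fix a b assume "a \<in> insert s (neighbours E Y s)" "b \<in> insert s (neighbours E Y s)" "a \<noteq> b"
  then consider "a = s" "b \<in> neighbours E Y s" | "b = s" "a \<in> neighbours E Y s"
    | "a \<in> neighbours E Y s" "b \<in> neighbours E Y s"
    by blast
  then show "{a, b} \<in> E"
  proof cases
    case 1
    then show ?thesis
      unfolding neighbours_def by simp
  next
    case 2
    then have "{s, a} \<in> E"
      unfolding neighbours_def by simp
    then show ?thesis
      using 2 by (simp add: insert_commute)
  next
    case 3
    have "clique Y E (neighbours E Y s)"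
      using assms unfolding simplicial_vertex_def by simp
    from clique_edge[OF this 3 \<open>a \<noteq> b\<close>] show ?thesis .
  qed
qed

lemma clique_subset_closed_neighbourhood:
  "clique Y E K \<Longrightarrow> s \<in> K \<Longrightarrow> K \<subseteq> insert s (neighbours E Y s)"
  using clique_edge[of Y E K s] clique_subset[of Y E K] unfolding neighbours_def by auto

lemma maximal_clique_at_simplicial_vertex:
  assumes "simplicial_vertex E Y s" "maximal_clique Y E K" "s \<in> K"
  shows "K = insert s (neighbours E Y s)"
proof -
  have "K \<subseteq> insert s (neighbours E Y s)"
    using clique_subset_closed_neighbourhood[OF maximal_cliqueD(1)[OF assms(2)] assms(3)] .
  then have "insert s (neighbours E Y s) = K"
    by (rule maximal_cliqueD(2)[OF assms(2) closed_neighbourhood_clique[OF assms(1)]])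
  then show ?thesis
    by (rule sym)
qed

lemma exposed_edge_at_simplicial_vertex:
  assumes "simplicial_vertex E Y s" "w \<in> neighbours E Y s"
    and "insert s (neighbours E Y s) \<noteq> {s, w}"
  shows "exposed_edge Y E {s, w}"
proof (rule exposed_edgeI[OF _ closed_neighbourhood_clique[OF assms(1)]])
  show "{s, w} \<in> E" "{s, w} \<subseteq> insert s (neighbours E Y s)"
    using assms(2) unfolding neighbours_def by auto
  show "K \<subseteq> insert s (neighbours E Y s)" if "clique Y E K" "{s, w} \<subseteq> K" for K
    using clique_subset_closed_neighbourhood[OF that(1)] that(2) by simp
qed (use assms(3) in auto)

text \<open>Cliques through \<open>s\<close> lie in its closed neighbourhood, so cliques containing \<open>f\<close>
  avoid \<open>s\<close>.\<close>
lemma exposed_edge_lift: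
  assumes "finite Y" "exposed_edge (Y - {s}) E f" "\<not> f \<subseteq> neighbours E Y s"
  shows "exposed_edge Y E f"
proof -
  obtain C where C: "maximal_clique (Y - {s}) E C" "f \<subseteq> C" "C \<noteq> f"
    and top: "\<And>K. clique (Y - {s}) E K \<Longrightarrow> f \<subseteq> K \<Longrightarrow> K \<subseteq> C"
    using exposed_edgeE[OF assms(1)[THEN finite_Diff] assms(2)] by blast
  have f: "f \<in> E" "f \<subseteq> Y - {s}"
    using exposed_edge_subset[OF assms(2)] by auto
  show ?thesis
  proof (rule exposed_edgeI[OF f(1) _ C(2,3)])
    show "clique Y E C"
      using clique_vertices_change[OF maximal_cliqueD(1)[OF C(1)]]
        clique_subset[OF maximal_cliqueD(1)[OF C(1)]] by blast
    fix K assume K: "clique Y E K" "f \<subseteq> K"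
    have "s \<notin> K"
    proof
      assume "s \<in> K"
      then have "f \<subseteq> insert s (neighbours E Y s)"
        using clique_subset_closed_neighbourhood[OF K(1)] K(2) by blast
      then show False
        using f(2) assms(3) by blast
    qed
    then have "K \<subseteq> Y - {s}"
      using clique_subset[OF K(1)] by blast
    then have "clique (Y - {s}) E K"
      by (rule clique_vertices_change[OF K(1)])
    then show "K \<subseteq> C"
      using top K(2) by blast
  qed
qed

section \<open>Exposed edges crossing a cut\<close>

definition splits :: "'a set \<Rightarrow> 'a set \<Rightarrow> bool" where
  "splits A C \<longleftrightarrow> C \<inter> A \<noteq> {} \<and> C - A \<noteq> {}"

definition crosses :: "'a set \<Rightarrow> 'a set \<Rightarrow> bool" where
  "crosses A f \<longleftrightarrow> (\<exists>u v. f = {u, v} \<and> u \<in> A \<and> v \<notin> A)"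

lemma crossesI: "(u \<in> A \<longleftrightarrow> v \<notin> A) \<Longrightarrow> crosses A {u, v}"
  unfolding crosses_def by (cases "u \<in> A") (auto simp: insert_commute)

lemma splits_opposite: "splits A C \<Longrightarrow> \<exists>w\<in>C. (s \<in> A \<longleftrightarrow> w \<notin> A)"
  unfolding splits_def by (cases "s \<in> A") auto

lemma exposed_edge_in_unique_splitting_clique:
  assumes "finite Y" "maximal_clique Y E D" "3 \<le> card D"
    and unique: "\<And>M. maximal_clique Y E M \<Longrightarrow> splits A M \<Longrightarrow> 3 \<le> card M \<Longrightarrow> M = D"
    and uv: "u \<in> D" "v \<in> D" "u \<in> A \<longleftrightarrow> v \<notin> A"
  shows "exposed_edge Y E {u, v}"
proof (rule exposed_edgeI[OF _ maximal_cliqueD(1)[OF assms(2)]])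
  have "u \<noteq> v"
    using uv(3) by blast
  then show "{u, v} \<in> E"
    using clique_edge[OF maximal_cliqueD(1)[OF assms(2)] uv(1,2)] by blast
  show "{u, v} \<subseteq> D"
    using uv(1,2) by simp
  show "D \<noteq> {u, v}"
    using assms(3) by (cases "u = v") auto
  fix K assume K: "clique Y E K" "{u, v} \<subseteq> K"
  obtain M where M: "maximal_clique Y E M" "K \<subseteq> M"
    using ex_maximal_clique[OF assms(1) K(1)] .
  have "finite M"
    using finite_subset[OF clique_subset[OF maximal_cliqueD(1)[OF M(1)]] assms(1)] .
  show "K \<subseteq> D"
  proof (cases "3 \<le> card M")
    case True
    have "splits A M"
      using K(2) M(2) uv(3) unfolding splits_def by blast
    then show ?thesis
      using unique[OF M(1) _ True] M(2) by simp
  next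
    case False
    have "{u, v} \<subseteq> M"
      using K(2) M(2) by blast
    have "card {u, v} = 2"
      using \<open>u \<noteq> v\<close> by simp
    moreover have "card {u, v} \<le> card M"
      by (rule card_mono[OF \<open>finite M\<close> \<open>{u, v} \<subseteq> M\<close>])
    ultimately have "card {u, v} = card M"
      using False by linarith
    then have "M = {u, v}"
      using card_subset_eq[OF \<open>finite M\<close> \<open>{u, v} \<subseteq> M\<close>] by simp
    then have "D = M"
      using maximal_cliqueD(2)[OF M(1) maximal_cliqueD(1)[OF assms(2)]] uv(1,2) by simp
    then show ?thesis
      using False assms(3) by simp
  qed
qed

text \<open>Reduction from cliques to maximal cliques; the maximal case is a hypothesis because the
  induction below applies this lemma to a smaller vertex set.\<close>
lemma exposed_crossing_edge_outside_clique:
  assumes "finite Y" "maximal_clique Y E D" "splits A D" "3 \<le> card D"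
    and K: "clique Y E K" "\<not> D \<subseteq> K"
    and outside_maximal: "\<And>C D. maximal_clique Y E C \<Longrightarrow> maximal_clique Y E D \<Longrightarrow> C \<noteq> D \<Longrightarrow>
      splits A D \<Longrightarrow> 3 \<le> card D \<Longrightarrow> \<exists>f. exposed_edge Y E f \<and> crosses A f \<and> \<not> f \<subseteq> C"
  shows "\<exists>f. exposed_edge Y E f \<and> crosses A f \<and> \<not> f \<subseteq> K"
proof -
  obtain C where C: "maximal_clique Y E C" "K \<subseteq> C"
    using ex_maximal_clique[OF assms(1) K(1)] .
  consider (other) "C \<noteq> D"
    | (other_splitting) M where "C = D" "maximal_clique Y E M" "splits A M" "3 \<le> card M" "M \<noteq> D"
    | (unique) "\<And>M. maximal_clique Y E M \<Longrightarrow> splits A M \<Longrightarrow> 3 \<le> card M \<Longrightarrow> M = D"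
    by blast
  then show ?thesis
  proof cases
    case other
    then show ?thesis
      using outside_maximal[OF C(1) assms(2) other assms(3,4)] C(2) by blast
  next
    case other_splitting
    then show ?thesis
      using outside_maximal[OF assms(2) other_splitting(2) other_splitting(5)[symmetric]
          other_splitting(3,4)] C(2) by blast
  next
    case unique
    obtain w where w: "w \<in> D" "w \<notin> K"
      using K(2) by blast
    obtain q where q: "q \<in> D" "w \<in> A \<longleftrightarrow> q \<notin> A"
      using splits_opposite[OF assms(3)] by blast
    have "exposed_edge Y E {w, q}"
      by (rule exposed_edge_in_unique_splitting_clique[OF assms(1,2,4) unique w(1) q])
    then show ?thesis
      using crossesI[OF q(2)] w(2) by blast
  qed
qed

lemma exposed_crossing_edge_lift:
  assumes "finite Y" "simplicial_vertex E Y s" "exposed_edge (Y - {s}) E f" "crosses A f"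
  obtains g where "exposed_edge Y E g" "crosses A g" "g = f \<or> s \<in> g"
proof (cases "f \<subseteq> neighbours E Y s")
  case False
  then show ?thesis
    using that exposed_edge_lift[OF assms(1,3)] assms(4) by blast
next
  case True
  obtain u v where uv: "f = {u, v}" "u \<in> A" "v \<notin> A"
    using assms(4) unfolding crosses_def by blast
  have "f \<subseteq> Y - {s}"
    using exposed_edge_subset(2)[OF assms(3)] .
  then have "s \<noteq> u" "s \<noteq> v"
    using uv(1) by auto
  obtain w where w: "w \<in> f" "s \<in> A \<longleftrightarrow> w \<notin> A"
    using uv by (cases "s \<in> A") auto
  have "insert s (neighbours E Y s) \<noteq> {s, w}"
    using True uv \<open>s \<noteq> u\<close> \<open>s \<noteq> v\<close> w(1) by auto
  then have "exposed_edge Y E {s, w}"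
    using exposed_edge_at_simplicial_vertex[OF assms(2)] True w(1) by blast
  then show ?thesis
    using that crossesI[OF w(2)] by blast
qed

lemma exposed_crossing_edge_at_simplicial_vertex:
  assumes "simplicial_vertex E Y s" "D = insert s (neighbours E Y s)" "splits A D" "3 \<le> card D"
  obtains w where "exposed_edge Y E {s, w}" "crosses A {s, w}"
proof -
  obtain w where w: "w \<in> D" "s \<in> A \<longleftrightarrow> w \<notin> A"
    using splits_opposite[OF assms(3)] by blast
  have "w \<in> neighbours E Y s"
    using w assms(2) by blast
  moreover have "insert s (neighbours E Y s) \<noteq> {s, w}"
  proof
    assume "insert s (neighbours E Y s) = {s, w}"
    with assms(2) have "D = {s, w}"
      by (rule trans)
    then have "card D \<le> 2"
      by (cases "s = w") simp_all
    then show False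
      using assms(4) by simp
  qed
  ultimately have "exposed_edge Y E {s, w}"
    by (rule exposed_edge_at_simplicial_vertex[OF assms(1)])
  then show ?thesis
    using that crossesI[OF w(2)] by blast
qed

lemma exposed_crossing_edge_outside_closed_neighbourhood:
  assumes "finite Y" "simplicial_vertex E Y s"
    and D: "maximal_clique (Y - {s}) E D" "splits A D" "3 \<le> card D"
      "\<not> D \<subseteq> insert s (neighbours E Y s)"
    and outside_maximal: "\<And>C D. maximal_clique (Y - {s}) E C \<Longrightarrow> maximal_clique (Y - {s}) E D \<Longrightarrow>
      C \<noteq> D \<Longrightarrow> splits A D \<Longrightarrow> 3 \<le> card D \<Longrightarrow>
      \<exists>f. exposed_edge (Y - {s}) E f \<and> crosses A f \<and> \<not> f \<subseteq> C"
  shows "\<exists>f. exposed_edge Y E f \<and> crosses A f \<and> \<not> f \<subseteq> insert s (neighbours E Y s)"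
proof -
  let ?K = "neighbours E Y s - {s}"
  have K: "clique Y E ?K"
    using clique_subset_clique[OF closed_neighbourhood_clique[OF assms(2)]] by blast
  then have "?K \<subseteq> Y - {s}"
    using clique_subset by blast
  with K have "clique (Y - {s}) E ?K"
    by (rule clique_vertices_change)
  moreover have "\<not> D \<subseteq> ?K"
    using D(4) by blast
  ultimately have "\<exists>f. exposed_edge (Y - {s}) E f \<and> crosses A f \<and> \<not> f \<subseteq> ?K"
    by (rule exposed_crossing_edge_outside_clique[OF finite_Diff[OF assms(1)] D(1-3) _ _
          outside_maximal])
  then obtain f where f: "exposed_edge (Y - {s}) E f" "crosses A f" "\<not> f \<subseteq> ?K"
    by blast
  have "\<not> f \<subseteq> insert s (neighbours E Y s)"
    using f(3) exposed_edge_subset(2)[OF f(1)] by blast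
  then show ?thesis
    using exposed_edge_lift[OF assms(1) f(1)] f(2) by blast
qed

text \<open>Delete a simplicial vertex \<open>s\<close>: its closed neighbourhood is the only maximal clique
  through \<open>s\<close>, and the maximal cliques avoiding \<open>s\<close> stay maximal in \<open>Y - {s}\<close>.\<close>
lemma exposed_crossing_edge_outside_maximal_clique:
  assumes "finite Y" "hereditarily_simplicial E Y"
    and "maximal_clique Y E C" "maximal_clique Y E D" "C \<noteq> D" "splits A D" "3 \<le> card D"
  shows "\<exists>f. exposed_edge Y E f \<and> crosses A f \<and> \<not> f \<subseteq> C"
  using assms
proof (induction Y arbitrary: C D rule: finite_psubset_induct)
  case (psubset Y)
  have "Y \<noteq> {}"
    using clique_subset[OF maximal_cliqueD(1)[OF psubset.prems(3)]] psubset.prems(6) by auto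
  then obtain s where s: "simplicial_vertex E Y s"
    using psubset.prems(1) unfolding hereditarily_simplicial_def by blast
  then have "Y - {s} \<subset> Y"
    unfolding simplicial_vertex_def by blast
  have IH: "\<exists>f. exposed_edge (Y - {s}) E f \<and> crosses A f \<and> \<not> f \<subseteq> C'"
    if "maximal_clique (Y - {s}) E C'" "maximal_clique (Y - {s}) E D'" "C' \<noteq> D'"
      "splits A D'" "3 \<le> card D'" for C' D'
    by (rule psubset.IH[OF \<open>Y - {s} \<subset> Y\<close>
          hereditarily_simplicial_subset[OF psubset.prems(1) Diff_subset] that])
  consider (sD) "s \<in> D" | (sC) "s \<notin> D" "s \<in> C" | (neither) "s \<notin> D" "s \<notin> C"
    by blast
  then show ?case
  proof cases
    case sD
    have "s \<notin> C"
      using maximal_clique_at_simplicial_vertex[OF s] psubset.prems(2-4) sD by metis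
    obtain w where "exposed_edge Y E {s, w}" "crosses A {s, w}"
      using exposed_crossing_edge_at_simplicial_vertex[OF s
          maximal_clique_at_simplicial_vertex[OF s psubset.prems(3) sD] psubset.prems(5,6)] .
    then show ?thesis
      using \<open>s \<notin> C\<close> by blast
  next
    case sC
    have "\<not> D \<subseteq> C"
      using maximal_cliqueD(2)[OF psubset.prems(3) maximal_cliqueD(1)[OF psubset.prems(2)]]
        psubset.prems(4) by blast
    then show ?thesis
      using exposed_crossing_edge_outside_closed_neighbourhood[OF psubset.hyps(1) s
          maximal_clique_Diff_vertex[OF psubset.prems(3) sC(1)] psubset.prems(5,6) _ IH]
        maximal_clique_at_simplicial_vertex[OF s psubset.prems(2) sC(2)] by simp
  next
    case neither
    obtain f where f: "exposed_edge (Y - {s}) E f" "crosses A f" "\<not> f \<subseteq> C"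
      using IH[OF maximal_clique_Diff_vertex[OF psubset.prems(2) neither(2)]
          maximal_clique_Diff_vertex[OF psubset.prems(3) neither(1)] psubset.prems(4-6)] by blast
    obtain g where "exposed_edge Y E g" "crosses A g" "g = f \<or> s \<in> g"
      using exposed_crossing_edge_lift[OF psubset.hyps(1) s f(1,2)] .
    then show ?thesis
      using f(3) neither(2) by blast
  qed
qed

lemma exposed_crossing_edge_other:
  assumes "finite X" "hereditarily_simplicial E X" "exposed_edge X E e" "crosses A e"
  shows "\<exists>f. f \<noteq> e \<and> exposed_edge X E f \<and> crosses A f"
proof -
  obtain C where C: "maximal_clique X E C" "e \<subseteq> C" "C \<noteq> e"
    using exposed_edgeE[OF assms(1,3)] by metis
  obtain x y where xy: "e = {x, y}" "x \<in> A" "y \<notin> A"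
    using assms(4) unfolding crosses_def by blast
  have "finite C"
    using finite_subset[OF clique_subset[OF maximal_cliqueD(1)[OF C(1)]] assms(1)] .
  moreover have "e \<subset> C"
    using C(2,3) by blast
  ultimately have "card e < card C"
    by (rule psubset_card_mono)
  then have card_C: "3 \<le> card C"
    using xy by (cases "x = y") auto
  have splits_C: "splits A C"
    using C(2) xy unfolding splits_def by blast
  have clique_e: "clique X E e"
    using clique_subset_clique[OF maximal_cliqueD(1)[OF C(1)] C(2)] .
  have "\<not> C \<subseteq> e"
    using C(2,3) by blast
  have "\<exists>f. exposed_edge X E f \<and> crosses A f \<and> \<not> f \<subseteq> e"
    by (rule exposed_crossing_edge_outside_clique[OF assms(1) C(1) splits_C card_C clique_e
          \<open>\<not> C \<subseteq> e\<close> exposed_crossing_edge_outside_maximal_clique[OF assms(1,2)]])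
  then show ?thesis
    by blast
qed

section \<open>Erasing an exposed edge preserves chordality\<close>

lemma singleton_notin_complete_graph: "{a} \<notin> complete_graph X"
  unfolding complete_graph_def by (auto simp: doubleton_eq_iff)

lemma not_neighbour_self:
  assumes "E \<subseteq> complete_graph X"
  shows "s \<notin> neighbours E Y s"
proof
  assume "s \<in> neighbours E Y s"
  then have "{s} \<in> complete_graph X"
    using assms unfolding neighbours_def by auto
  then show False
    by (simp add: singleton_notin_complete_graph)
qed

lemma hereditarily_simplicial_complete_graph: "hereditarily_simplicial (complete_graph X) X"
  unfolding hereditarily_simplicial_def
proof (intro allI impI)
  fix Z assume "Z \<subseteq> X" "Z \<noteq> {}"
  then obtain s where "s \<in> Z"
    by blast
  have "clique Z (complete_graph X) (neighbours (complete_graph X) Z s)"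
    using \<open>Z \<subseteq> X\<close> unfolding clique_def neighbours_def complete_graph_def by blast
  then show "\<exists>s. simplicial_vertex (complete_graph X) Z s"
    using \<open>s \<in> Z\<close> unfolding simplicial_vertex_def by blast
qed

lemma simplicial_vertex_Diff_edge:
  assumes "simplicial_vertex E Z s" "\<not> e \<subseteq> neighbours E Z s"
  shows "simplicial_vertex (E - {e}) Z s"
proof -
  have N: "neighbours (E - {e}) Z s \<subseteq> neighbours E Z s"
    unfolding neighbours_def by blast
  have "clique Z E (neighbours E Z s)"
    using assms(1) unfolding simplicial_vertex_def by simp
  then have "clique Z (E - {e}) (neighbours (E - {e}) Z s)"
    using N assms(2) unfolding clique_def by (auto simp: doubleton_eq_iff)
  then show ?thesis
    using assms(1) unfolding simplicial_vertex_def by simp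
qed

lemma simplicial_vertex_Diff_edge_if_neighbours_in_clique:
  assumes "t \<in> Z" "clique X E C" "neighbours (E - {e}) Z t \<subseteq> C" "t \<in> e"
    and "E \<subseteq> complete_graph X"
  shows "simplicial_vertex (E - {e}) Z t"
  unfolding simplicial_vertex_def clique_def
proof (intro conjI ballI impI)
  fix a b assume ab: "a \<in> neighbours (E - {e}) Z t" "b \<in> neighbours (E - {e}) Z t" "a \<noteq> b"
  have "{a, b} \<in> E"
    using clique_edge[OF assms(2)] ab assms(3) by blast
  moreover have "t \<noteq> a" "t \<noteq> b"
    using ab(1,2) not_neighbour_self[of "E - {e}" X t Z] assms(5) by auto
  then have "{a, b} \<noteq> e"
    using assms(4) by blast
  ultimately show "{a, b} \<in> E - {e}"
    by simp
qed (use assms(1) in \<open>auto simp: neighbours_def\<close>)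

lemma simplicial_vertex_insert_nonadjacent:
  assumes "simplicial_vertex H (Z - {s}) t" "{t, s} \<notin> H"
  shows "simplicial_vertex H Z t" "neighbours H Z t = neighbours H (Z - {s}) t"
proof -
  show N: "neighbours H Z t = neighbours H (Z - {s}) t"
    using assms(2) unfolding neighbours_def by blast
  have "clique (Z - {s}) H (neighbours H (Z - {s}) t)"
    using assms(1) unfolding simplicial_vertex_def by simp
  then have "clique Z H (neighbours H Z t)"
    unfolding N by (rule clique_vertices_change) (auto simp: neighbours_def)
  then show "simplicial_vertex H Z t"
    using assms(1) unfolding simplicial_vertex_def by simp
qed

lemma simplicial_vertex_Diff_edge_endpoint:
  assumes "simplicial_vertex (E - {e}) Z t" "clique X E C" "t \<in> C" "e \<subseteq> C" "e \<subseteq> Z"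
    and e: "e = {x, y}" "x \<noteq> y"
  shows "t \<in> e"
proof (rule ccontr)
  assume "t \<notin> e"
  then have "{t, x} \<in> E - {e}" "{t, y} \<in> E - {e}"
    using clique_edge[OF assms(2,3)] assms(4) e by (auto simp: doubleton_eq_iff)
  then have "x \<in> neighbours (E - {e}) Z t" "y \<in> neighbours (E - {e}) Z t"
    using assms(5) e(1) unfolding neighbours_def by auto
  then have "{x, y} \<in> E - {e}"
    using assms(1) e(2) clique_edge unfolding simplicial_vertex_def by metis
  then show False
    using e(1) by simp
qed

lemma simplicial_vertex_Diff_edge_insert:
  assumes t: "simplicial_vertex (E - {e}) (Z - {s}) t"
      "t \<in> e \<longrightarrow> neighbours (E - {e}) (Z - {s}) t \<subseteq> C"
    and "insert s (neighbours E Z s) \<subseteq> C" "clique X E C" "e \<subseteq> C" "e \<subseteq> Z - {s}"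
    and "e = {x, y}" "x \<noteq> y" "E \<subseteq> complete_graph X"
  shows "\<exists>t. simplicial_vertex (E - {e}) Z t \<and> (t \<in> e \<longrightarrow> neighbours (E - {e}) Z t \<subseteq> C)"
proof (cases "{t, s} \<in> E - {e}")
  case False
  then show ?thesis
    using simplicial_vertex_insert_nonadjacent[OF t(1)] t(2) by metis
next
  case True
  have "t \<in> Z"
    using t(1) unfolding simplicial_vertex_def by simp
  then have "t \<in> C"
    using True assms(3) unfolding neighbours_def by (auto simp: insert_commute)
  have "t \<in> e"
    using simplicial_vertex_Diff_edge_endpoint[OF t(1) assms(4) \<open>t \<in> C\<close> assms(5,6,7,8)] .
  have "neighbours (E - {e}) Z t \<subseteq> C"
    using t(2) \<open>t \<in> e\<close> assms(3) unfolding neighbours_def by auto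
  then show ?thesis
    using simplicial_vertex_Diff_edge_if_neighbours_in_clique[OF \<open>t \<in> Z\<close> assms(4) _ \<open>t \<in> e\<close>
        assms(9)] \<open>t \<in> e\<close>
    by blast
qed

text \<open>The second conjunct strengthens the induction hypothesis: it keeps an endpoint of \<open>e\<close>
  simplicial when the deleted vertex is put back.\<close>
lemma simplicial_vertex_Diff_exposed_edge:
  assumes "hereditarily_simplicial E X" "E \<subseteq> complete_graph X"
    and C: "clique X E C" "e \<subseteq> C" "\<And>K. clique X E K \<Longrightarrow> e \<subseteq> K \<Longrightarrow> K \<subseteq> C"
    and e: "e = {x, y}" "x \<noteq> y" "e \<in> E"
  shows "finite Z \<Longrightarrow> Z \<subseteq> X \<Longrightarrow> e \<subseteq> Z \<Longrightarrow>
    \<exists>t. simplicial_vertex (E - {e}) Z t \<and> (t \<in> e \<longrightarrow> neighbours (E - {e}) Z t \<subseteq> C)"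
proof (induction Z rule: finite_psubset_induct)
  case (psubset Z)
  obtain s where s: "simplicial_vertex E Z s"
    using assms(1) psubset.prems unfolding hereditarily_simplicial_def
    by (metis e(1) empty_iff insert_subset)
  show ?case
  proof (cases "e \<subseteq> insert s (neighbours E Z s)")
    case False
    then have "s \<notin> e"
      using e psubset.prems(2) unfolding neighbours_def by (auto simp: insert_commute)
    then show ?thesis
      using simplicial_vertex_Diff_edge[OF s] False by blast
  next
    case True
    have "insert s (neighbours E Z s) \<subseteq> X"
      using clique_subset[OF closed_neighbourhood_clique[OF s]] psubset.prems(1) by blast
    then have "clique X E (insert s (neighbours E Z s))"
      by (rule clique_vertices_change[OF closed_neighbourhood_clique[OF s]])
    then have N_C: "insert s (neighbours E Z s) \<subseteq> C"
      using C(3) True by blast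
    show ?thesis
    proof (cases "s \<in> e")
      case True
      have "\<not> e \<subseteq> neighbours E Z s"
        using True not_neighbour_self[OF assms(2)] by blast
      moreover have "neighbours (E - {e}) Z s \<subseteq> C"
        using N_C unfolding neighbours_def by blast
      ultimately show ?thesis
        using simplicial_vertex_Diff_edge[OF s] by blast
    next
      case False
      have "s \<in> Z"
        using s unfolding simplicial_vertex_def by simp
      then have "e \<subseteq> Z - {s}" "Z - {s} \<subset> Z" "Z - {s} \<subseteq> X"
        using False psubset.prems by auto
      then obtain t where "simplicial_vertex (E - {e}) (Z - {s}) t"
        "t \<in> e \<longrightarrow> neighbours (E - {e}) (Z - {s}) t \<subseteq> C"
        using psubset.IH by blast
      then show ?thesis
        using simplicial_vertex_Diff_edge_insert[OF _ _ N_C C(1,2) \<open>e \<subseteq> Z - {s}\<close> e(1,2) assms(2)]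
        by blast
    qed
  qed
qed

lemma hereditarily_simplicial_Diff_exposed_edge:
  assumes "finite X" "hereditarily_simplicial E X" "E \<subseteq> complete_graph X" "exposed_edge X E e"
  shows "hereditarily_simplicial (E - {e}) X"
  unfolding hereditarily_simplicial_def
proof (intro allI impI)
  fix Z assume Z: "Z \<subseteq> X" "Z \<noteq> {}"
  obtain C where C: "maximal_clique X E C" "e \<subseteq> C" "\<And>K. clique X E K \<Longrightarrow> e \<subseteq> K \<Longrightarrow> K \<subseteq> C"
    using exposed_edgeE[OF assms(1,4)] by metis
  have "e \<in> complete_graph X"
    using exposed_edge_subset(1)[OF assms(4)] assms(3) by blast
  then obtain x y where e: "e = {x, y}" "x \<noteq> y"
    unfolding complete_graph_def by blast
  show "\<exists>s. simplicial_vertex (E - {e}) Z s"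
  proof (cases "e \<subseteq> Z")
    case True
    then show ?thesis
      using simplicial_vertex_Diff_exposed_edge[OF assms(2,3) maximal_cliqueD(1)[OF C(1)] C(2,3) e
          exposed_edge_subset(1)[OF assms(4)]] finite_subset[OF Z(1) assms(1)] Z(1)
      by blast
  next
    case False
    obtain s where s: "simplicial_vertex E Z s"
      using assms(2) Z unfolding hereditarily_simplicial_def by blast
    have "\<not> e \<subseteq> neighbours E Z s"
      using False unfolding neighbours_def by blast
    then show ?thesis
      using simplicial_vertex_Diff_edge[OF s] by blast
  qed
qed

section \<open>Minimum connected spanning subgraphs\<close>

abbreviation reach :: "'a set set \<Rightarrow> 'a \<Rightarrow> 'a \<Rightarrow> bool" where
  "reach E \<equiv> (\<lambda>u v. {u, v} \<in> E)\<^sup>*\<^sup>*"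

lemma reach_sym: "reach E a b \<Longrightarrow> reach E b a"
  by (rule sympD[OF symp_rtranclp]) (auto simp: symp_def insert_commute)

lemma reach_mono: "reach E a b \<Longrightarrow> E \<subseteq> E' \<Longrightarrow> reach E' a b"
  by (rule mono_rtranclp[rule_format, of "\<lambda>u v. {u, v} \<in> E"]) auto

lemma reach_Diff_edge:
  "reach E x b \<Longrightarrow> reach (E - {{x, y}}) x b \<or> reach (E - {{x, y}}) y b"
proof (induction rule: rtranclp_induct)
  case (step c d)
  show ?case
  proof (cases "{c, d} = {x, y}")
    case True
    then have "d = x \<or> d = y"
      by (auto simp: doubleton_eq_iff)
    then show ?thesis
      by auto
  next
    case False
    then have "{c, d} \<in> E - {{x, y}}"
      using step.hyps(2) by simp
    with step.IH show ?thesis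
      by (meson rtranclp.rtrancl_into_rtrancl)
  qed
qed simp

lemma reach_Diff_edge_if_reach:
  assumes "reach (E - {{x, y}}) x y"
  shows "reach E a b \<Longrightarrow> reach (E - {{x, y}}) a b"
proof (induction rule: rtranclp_induct)
  case (step c d)
  have "reach (E - {{x, y}}) c d"
  proof (cases "{c, d} = {x, y}")
    case True
    then show ?thesis
      using assms reach_sym[OF assms] by (auto simp: doubleton_eq_iff)
  next
    case False
    then show ?thesis
      using step.hyps(2) by auto
  qed
  with step.IH show ?case
    by (rule rtranclp_trans)
qed simp

lemma connected_onI:
  assumes "\<And>w. w \<in> X \<Longrightarrow> reach E c w"
  shows "connected_on X E"
  unfolding connected_on_def
proof (intro ballI)
  fix a b assume "a \<in> X" "b \<in> X"
  show "reach E a b"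
    by (rule rtranclp_trans[OF reach_sym[OF assms[OF \<open>a \<in> X\<close>]] assms[OF \<open>b \<in> X\<close>]])
qed

text \<open>\<open>v\<close> is not in the component of \<open>x\<close> in \<open>T - {{x, y}}\<close>, hence in that of \<open>y\<close>, and
  \<open>{u, v}\<close> joins the two components.\<close>
lemma connected_on_exchange:
  assumes "connected_on X T" "x \<in> X" "v \<in> X"
    and "reach (T - {{x, y}}) x u" "\<not> reach (T - {{x, y}}) x v"
  shows "connected_on X (insert {u, v} (T - {{x, y}}))"
proof -
  let ?R = "T - {{x, y}}" and ?T = "insert {u, v} (T - {{x, y}})"
  have split: "reach ?R x w \<or> reach ?R y w" if "w \<in> X" for w
  proof -
    have "reach T x w"
      using assms(1,2) that unfolding connected_on_def by blast
    then show ?thesis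
      by (rule reach_Diff_edge)
  qed
  have "reach ?R y v"
    using split[OF assms(3)] assms(5) by blast
  have "reach ?T x u" "reach ?T v y"
    using reach_mono[OF assms(4) subset_insertI]
      reach_mono[OF reach_sym[OF \<open>reach ?R y v\<close>] subset_insertI] by auto
  moreover have "reach ?T u v"
    by auto
  ultimately have "reach ?T x y"
    by (meson rtranclp_trans)
  then have "reach ?T x w" if "w \<in> X" for w
    using split[OF that] reach_mono[of ?R _ w ?T] by (meson rtranclp_trans subset_insertI)
  then show ?thesis
    by (rule connected_onI)
qed

lemma edge_weight_doubleton:
  assumes "a \<noteq> b"
  shows "edge_weight d {a, b} = d a b \<or> edge_weight d {a, b} = d b a"
proof -
  define p where "p = (SOME x. x \<in> {a, b})"
  have p: "p \<in> {a, b}"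
    unfolding p_def by (rule someI[of _ a]) simp
  define q where "q = (SOME y. y \<in> {a, b} \<and> y \<noteq> p)"
  have "\<exists>y. y \<in> {a, b} \<and> y \<noteq> p"
    using p assms by auto
  then have q: "q \<in> {a, b} \<and> q \<noteq> p"
    unfolding q_def by (rule someI_ex)
  have "edge_weight d {a, b} = d p q"
    unfolding edge_weight_def p_def q_def by simp
  then show ?thesis
    using p q by auto
qed

lemma edge_weight_pos:
  assumes "finite_metric_space X d" "f \<in> complete_graph X"
  shows "0 < edge_weight d f"
proof -
  obtain a b where ab: "f = {a, b}" "a \<in> X" "b \<in> X" "a \<noteq> b"
    using assms(2) unfolding complete_graph_def by blast
  have "d a a \<le> d a b + d b a" "d a a = 0" "d b a = d a b" "d a b \<noteq> 0"
    using assms(1) ab(2-4) unfolding finite_metric_space_def by blast+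
  then have "0 < d a b" "0 < d b a"
    by linarith+
  then show ?thesis
    using edge_weight_doubleton[OF ab(4), of d] ab(1) by auto
qed

lemma finite_complete_graph: "finite X \<Longrightarrow> finite (complete_graph X)"
  by (rule finite_subset[of _ "Pow X"]) (auto simp: complete_graph_def)

definition connected_spanning :: "'a set \<Rightarrow> 'a set set \<Rightarrow> bool" where
  "connected_spanning X T \<longleftrightarrow> T \<subseteq> complete_graph X \<and> connected_on X T"

definition minimum_connected_spanning :: "'a set \<Rightarrow> ('a \<Rightarrow> 'a \<Rightarrow> real) \<Rightarrow> 'a set set \<Rightarrow> bool" where
  "minimum_connected_spanning X d T \<longleftrightarrow> connected_spanning X T \<and>
     (\<forall>T'. connected_spanning X T' \<longrightarrow> tree_weight d T \<le> tree_weight d T')"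

lemma ex_minimum_connected_spanning:
  assumes "finite X"
  obtains T where "minimum_connected_spanning X d T"
proof -
  let ?S = "{T. connected_spanning X T}"
  have "finite ?S"
    by (rule finite_subset[of _ "Pow (complete_graph X)"])
      (auto simp: connected_spanning_def finite_complete_graph[OF assms])
  moreover have "complete_graph X \<in> ?S"
    unfolding connected_spanning_def connected_on_def complete_graph_def
    by (auto intro: r_into_rtranclp)
  ultimately show ?thesis
    using that arg_min_if_finite(1)[of ?S "tree_weight d"] arg_min_least[of ?S _ "tree_weight d"]
    unfolding minimum_connected_spanning_def by (metis empty_iff mem_Collect_eq)
qed

text \<open>Positive edge weights make every edge of a minimum connected spanning subgraph a bridge.\<close>
lemma minimum_connected_spanning_tree:
  assumes "finite_metric_space X d" "minimum_connected_spanning X d T"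
  shows "minimum_spanning_tree X d T"
proof -
  have T: "T \<subseteq> complete_graph X" "connected_on X T"
    and min: "\<And>T'. connected_spanning X T' \<Longrightarrow> tree_weight d T \<le> tree_weight d T'"
    using assms(2) unfolding minimum_connected_spanning_def connected_spanning_def by blast+
  have "finite T"
    using finite_subset[OF T(1) finite_complete_graph] assms(1)
    unfolding finite_metric_space_def by blast
  have "\<not> reach (T - {{x, y}}) x y" if xy: "{x, y} \<in> T" for x y
  proof
    assume "reach (T - {{x, y}}) x y"
    then have "connected_on X (T - {{x, y}})"
      using reach_Diff_edge_if_reach T(2) unfolding connected_on_def by metis
    then have "connected_spanning X (T - {{x, y}})"
      using T(1) unfolding connected_spanning_def by blast
    then have "tree_weight d T \<le> tree_weight d (T - {{x, y}})"
      by (rule min)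
    moreover have "tree_weight d T = edge_weight d {x, y} + tree_weight d (T - {{x, y}})"
      unfolding tree_weight_def using sum.remove[OF \<open>finite T\<close> xy] .
    moreover have "0 < edge_weight d {x, y}"
      using edge_weight_pos[OF assms(1)] xy T(1) by blast
    ultimately show False
      by linarith
  qed
  then show ?thesis
    unfolding minimum_spanning_tree_def spanning_tree_def using T min
    unfolding connected_spanning_def by blast
qed

lemma minimum_connected_spanning_exchange:
  assumes fms: "finite_metric_space X d" and T: "minimum_connected_spanning X d T" "{x, y} \<in> T"
    and f: "f = {u, v}" "f \<in> complete_graph X" "edge_weight d f \<le> edge_weight d {x, y}"
    and cut: "reach (T - {{x, y}}) x u" "\<not> reach (T - {{x, y}}) x v"
  shows "minimum_connected_spanning X d (insert f (T - {{x, y}}))"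
proof -
  let ?R = "T - {{x, y}}"
  have T_conn: "T \<subseteq> complete_graph X" "connected_on X T"
    using T(1) unfolding minimum_connected_spanning_def connected_spanning_def by blast+
  have "x \<in> X" "v \<in> X"
    using T_conn(1) T(2) f(1,2) unfolding complete_graph_def by (auto simp: doubleton_eq_iff)
  then have "connected_spanning X (insert f ?R)"
    using connected_on_exchange[OF T_conn(2) _ _ cut] T_conn(1) f(1,2)
    unfolding connected_spanning_def by blast
  have "f \<notin> ?R"
    using cut f(1) rtranclp.rtrancl_into_rtrancl[of "\<lambda>u v. {u, v} \<in> ?R" x u v] by blast
  have "finite T"
    using finite_subset[OF T_conn(1) finite_complete_graph] fms
    unfolding finite_metric_space_def by blast
  have "tree_weight d (insert f ?R) = edge_weight d f + tree_weight d ?R"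
    unfolding tree_weight_def using \<open>finite T\<close> \<open>f \<notin> ?R\<close> by simp
  also have "\<dots> \<le> edge_weight d {x, y} + tree_weight d ?R"
    using f(3) by simp
  also have "\<dots> = tree_weight d T"
    unfolding tree_weight_def by (rule sum.remove[OF \<open>finite T\<close> T(2), symmetric])
  finally show ?thesis
    using T(1) \<open>connected_spanning X (insert f ?R)\<close> unfolding minimum_connected_spanning_def
    by force
qed

text \<open>If the erased edge \<open>e\<close> lies in \<open>T\<close>, some other exposed edge of \<open>G\<close> crosses the cut
  that \<open>T - {e}\<close> defines; it survives the erasure and, \<open>e\<close> being a heaviest exposed edge, it
  is no heavier than \<open>e\<close>.\<close>
lemma d_erasure_minimum_connected_spanning:
  assumes fms: "finite_metric_space X d" and G: "G \<subseteq> complete_graph X" "hereditarily_simplicial G X"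
    and erasure: "d_erasure X d G H"
    and T: "minimum_connected_spanning X d T" "T \<subseteq> G"
  shows "\<exists>T'. minimum_connected_spanning X d T' \<and> T' \<subseteq> H"
proof -
  have "finite X"
    using fms unfolding finite_metric_space_def by simp
  obtain e where e: "exposed_edge X G e" "H = G - {e}"
    and heaviest: "\<And>e'. exposed_edge X G e' \<Longrightarrow> edge_weight d e' \<le> edge_weight d e"
    using erasure unfolding d_erasure_def by blast
  show ?thesis
  proof (cases "e \<in> T")
    case False
    then show ?thesis
      using T e(2) by blast
  next
    case True
    then obtain x y where xy: "e = {x, y}"
      using T(2) G(1) unfolding complete_graph_def by blast
    define A where "A = {w. reach (T - {e}) x w}"
    have "\<not> reach (T - {e}) x y"
      using minimum_connected_spanning_tree[OF fms T(1)] True xy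
      unfolding minimum_spanning_tree_def spanning_tree_def by blast
    then have "crosses A e"
      using crossesI[of x A y] xy unfolding A_def by simp
    then obtain f where f: "f \<noteq> e" "exposed_edge X G f" "crosses A f"
      using exposed_crossing_edge_other[OF \<open>finite X\<close> G(2) e(1)] by blast
    obtain u v where uv: "f = {u, v}" "reach (T - {e}) x u" "\<not> reach (T - {e}) x v"
      using f(3) unfolding crosses_def A_def by blast
    have "minimum_connected_spanning X d (insert f (T - {e}))"
      using minimum_connected_spanning_exchange[OF fms T(1) True[unfolded xy] uv(1) _ _
          uv(2,3)[unfolded xy]]
        exposed_edge_subset(1)[OF f(2)] G(1) heaviest[OF f(2)] xy by blast
    moreover have "insert f (T - {e}) \<subseteq> H"
      using T(2) e(2) f(1) exposed_edge_subset(1)[OF f(2)] by blast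
    ultimately show ?thesis
      by blast
  qed
qed

lemma d_erasure_hereditarily_simplicial:
  assumes "finite X" "G \<subseteq> complete_graph X" "hereditarily_simplicial G X" "d_erasure X d G H"
  shows "H \<subseteq> G" "hereditarily_simplicial H X"
proof -
  obtain e where "exposed_edge X G e" "H = G - {e}"
    using assms(4) unfolding d_erasure_def by blast
  then show "H \<subseteq> G" "hereditarily_simplicial H X"
    using hereditarily_simplicial_Diff_exposed_edge[OF assms(1,3,2)] by auto
qed

theorem theorem3p2:
  fixes X :: "'a set" and d :: "'a \<Rightarrow> 'a \<Rightarrow> real" and m :: nat and G :: "nat \<Rightarrow> 'a set set"
  assumes "finite_metric_space X d"
    and "G 0 = complete_graph X"
    and "\<forall>i<m. d_erasure X d (G i) (G (Suc i))"
  shows "\<exists>T. minimum_spanning_tree X d T \<and> T \<subseteq> G m"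
proof -
  have "finite X"
    using assms(1) unfolding finite_metric_space_def by simp
  have "G i \<subseteq> complete_graph X \<and> hereditarily_simplicial (G i) X \<and>
      (\<exists>T. minimum_connected_spanning X d T \<and> T \<subseteq> G i)" if "i \<le> m" for i
    using that
  proof (induction i)
    case 0
    obtain T where "minimum_connected_spanning X d T"
      using ex_minimum_connected_spanning[OF \<open>finite X\<close>] .
    then show ?case
      using assms(2) hereditarily_simplicial_complete_graph
      unfolding minimum_connected_spanning_def connected_spanning_def by auto
  next
    case (Suc i)
    then have IH: "G i \<subseteq> complete_graph X" "hereditarily_simplicial (G i) X"
      "\<exists>T. minimum_connected_spanning X d T \<and> T \<subseteq> G i"
      and erasure: "d_erasure X d (G i) (G (Suc i))"
      using assms(3) by auto
    show ?case
      using d_erasure_hereditarily_simplicial[OF \<open>finite X\<close> IH(1,2) erasure]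
        d_erasure_minimum_connected_spanning[OF assms(1) IH(1,2) erasure] IH by blast
  qed
  then obtain T where "minimum_connected_spanning X d T" "T \<subseteq> G m"
    by blast
  then show ?thesis
    using minimum_connected_spanning_tree[OF assms(1)] by blast
qed

end
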